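(* Let $\mathbb{F}$ be an algebraically closed field of characteristic zero, $n\geq1$, and $A\in{\rm GL}_n(\mathbb{F})$. Then there exists an invertible diagonal matrix $D\in{\rm D}_n(\mathbb{F})$ such that $AD$ has $n$ pairwise distinct eigenvalues.
   Context: ${\rm D}_n(\mathbb{F})$ denotes the group of invertible diagonal $n\times n$ matrices over $\mathbb{F}$. *)

theory Defs
  imports "Jordan_Normal_Form.Char_Poly" "HOL-Computational_Algebra.Polynomial"
begin

end

theory Submission imports Defs begin

text \<open>Scaling the last column of \<open>A\<close> by \<open>s\<close> makes the characteristic
  polynomial affine in \<open>s\<close>: it equals \<open>f - s g\<close> with \<open>deg g < n\<close>, where \<open>f = x \<chi>\<close> and \<open>\<chi>\<close>
  is the characteristic polynomial of the scaled leading \<open>(n-1)\<times>(n-1)\<close> block. By induction the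
  nonzero roots of \<open>\<chi>\<close>, hence of \<open>f\<close>, are simple. Since \<open>deg g < deg f\<close>, the Wronskian
  \<open>f' g - f g'\<close> is nonzero, and this leaves only finitely many \<open>s\<close> for which \<open>f - s g\<close> has a
  multiple nonzero root. Finally \<open>A D\<close> is invertible, so \<open>0\<close> is not an eigenvalue and all
  \<open>n\<close> roots of its characteristic polynomial are simple, i.e. distinct.\<close>

definition simple_roots_on :: "'a set \<Rightarrow> 'a::idom poly \<Rightarrow> bool" where
  "simple_roots_on S p \<longleftrightarrow> (\<forall>x\<in>S. poly p x = 0 \<longrightarrow> poly (pderiv p) x \<noteq> 0)"

lemma wronskian_poly_neq_0:
  fixes f g :: "'a::field_char_0 poly"
  assumes deg: "degree g < degree f" and g0: "g \<noteq> 0"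
  shows "pderiv f * g - f * pderiv g \<noteq> 0"
proof -
  obtain n where df: "degree f = Suc n" using deg by (cases "degree f") auto
  define m where "m = degree g"
  have "m \<le> n" using deg df m_def by simp
  have "f \<noteq> 0" using deg by auto
  then have lf: "coeff f (Suc n) \<noteq> 0" using df by (metis leading_coeff_0_iff)
  have lg: "coeff g m \<noteq> 0" using g0 m_def by simp
  have c1: "coeff (pderiv f * g) (n + m) = of_nat (Suc n) * coeff f (Suc n) * coeff g m"
    using coeff_mult_degree_sum[of "pderiv f" g] df m_def by (simp add: degree_pderiv coeff_pderiv)
  have c2: "coeff (f * pderiv g) (n + m) = of_nat m * coeff f (Suc n) * coeff g m"
  proof (cases m)
    case 0
    then have "pderiv g = 0" using m_def by (simp add: pderiv_eq_0_iff)
    then show ?thesis using 0 by simp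
  next
    case (Suc k)
    have "coeff (f * pderiv g) (Suc n + k) = coeff f (Suc n) * coeff (pderiv g) k"
      using coeff_mult_degree_sum[of f "pderiv g"] df Suc m_def by (simp add: degree_pderiv)
    then show ?thesis using Suc by (simp add: coeff_pderiv algebra_simps)
  qed
  have "(of_nat (Suc n) - of_nat m :: 'a) \<noteq> 0"
    using \<open>m \<le> n\<close> of_nat_eq_iff[of "Suc n" m] by (auto simp del: of_nat_Suc)
  moreover have "coeff (pderiv f * g - f * pderiv g) (n + m)
      = (of_nat (Suc n) - of_nat m) * coeff f (Suc n) * coeff g m"
    using c1 c2 by (simp add: algebra_simps)
  ultimately have "coeff (pderiv f * g - f * pderiv g) (n + m) \<noteq> 0"
    using lf lg by simp
  then show ?thesis by auto
qed

lemma finite_non_simple_roots_perturbation: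
  fixes f g :: "'a::field_char_0 poly"
  assumes deg: "degree g < degree f" and f: "simple_roots_on S f"
  shows "finite {s. \<not> simple_roots_on S (f - Polynomial.smult s g)}"
proof (cases "g = 0")
  case True
  then show ?thesis using f by simp
next
  case False
  define W where "W = pderiv f * g - f * pderiv g"
  have "W \<noteq> 0" using wronskian_poly_neq_0[OF deg False] W_def by simp
  have "f \<noteq> 0" using deg by auto
  text \<open>A multiple root \<open>x\<close> of \<open>f - s g\<close> is a root of the Wronskian with \<open>s = f(x)/g(x)\<close>
    if \<open>g(x) \<noteq> 0\<close>; otherwise it is a (simple) root of \<open>f\<close> with \<open>s = f'(x)/g'(x)\<close>.\<close>
  have "{s. \<not> simple_roots_on S (f - Polynomial.smult s g)} \<subseteq>
      (\<lambda>x. poly f x / poly g x) ` {x. poly W x = 0} \<union>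
      (\<lambda>x. poly (pderiv f) x / poly (pderiv g) x) ` {x. poly f x = 0}"
  proof
    fix s assume "s \<in> {s. \<not> simple_roots_on S (f - Polynomial.smult s g)}"
    then obtain x where x: "x \<in> S" and r: "poly f x = s * poly g x"
      and d: "poly (pderiv f) x = s * poly (pderiv g) x"
      by (auto simp: simple_roots_on_def pderiv_diff Polynomial.pderiv_smult)
    show "s \<in> (\<lambda>x. poly f x / poly g x) ` {x. poly W x = 0} \<union>
      (\<lambda>x. poly (pderiv f) x / poly (pderiv g) x) ` {x. poly f x = 0}"
    proof (cases "poly g x = 0")
      case True
      then have "poly f x = 0" using r by simp
      then have "poly (pderiv f) x \<noteq> 0" using f x by (auto simp: simple_roots_on_def)
      then have "s = poly (pderiv f) x / poly (pderiv g) x" using d by auto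
      then show ?thesis using \<open>poly f x = 0\<close> by blast
    next
      case False
      then have "s = poly f x / poly g x" using r by simp
      moreover have "poly W x = 0" unfolding W_def using r d by simp
      ultimately show ?thesis by blast
    qed
  qed
  then show ?thesis
    using poly_roots_finite[OF \<open>W \<noteq> 0\<close>] poly_roots_finite[OF \<open>f \<noteq> 0\<close>] finite_subset by blast
qed

lemma size_proots_alg_closed:
  fixes p :: "'a::alg_closed_field poly"
  assumes "p \<noteq> 0"
  shows "size (proots p) = degree p"
proof -
  obtain M where "size M = degree p" and p: "p = Polynomial.smult (lead_coeff p) (\<Prod>x\<in>#M. [:-x, 1:])"
    using alg_closed_imp_factorization[OF assms] by blast
  have "proots (\<Prod>x\<in>#M. [:-x, 1:]) = M"
  proof (induction M)
    case (add x M)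
    have "(\<Prod>y\<in>#M. [:-y, 1:]) \<noteq> 0" by (auto simp: prod_mset_zero_iff)
    then show ?case using add.IH by (simp add: proots_mult del: mult_pCons_left)
  qed simp
  then have "proots p = M"
    using assms by (subst p) simp
  then show ?thesis using \<open>size M = degree p\<close> by simp
qed

lemma card_roots_rsquarefree:
  assumes "rsquarefree p"
  shows "card {x. poly p x = 0} = size (proots p)"
proof -
  have "p \<noteq> 0" using assms by (simp add: rsquarefree_def)
  have "size (proots p) = (\<Sum>x\<in>{x. poly p x = 0}. order x p)"
    using \<open>p \<noteq> 0\<close> by (simp add: size_multiset_overloaded_eq)
  also have "\<dots> = (\<Sum>x\<in>{x. poly p x = 0}. 1)"
    using assms \<open>p \<noteq> 0\<close> by (intro sum.cong) (auto simp: rsquarefree_root_order)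
  finally show ?thesis by simp
qed

lemma cofactor_cong_off_column:
  assumes B: "B \<in> carrier_mat n n" and B': "B' \<in> carrier_mat n n"
    and eq: "\<And>i k. i < n \<Longrightarrow> k < n \<Longrightarrow> k \<noteq> j \<Longrightarrow> B $$ (i, k) = B' $$ (i, k)"
  shows "cofactor B i j = cofactor B' i j"
proof -
  have "mat_delete B i j $$ (a, b) = mat_delete B' i j $$ (a, b)" if "a < n - 1" "b < n - 1" for a b
  proof -
    have "B $$ (if a < i then a else Suc a, if b < j then b else Suc b)
        = B' $$ (if a < i then a else Suc a, if b < j then b else Suc b)"
      by (rule eq) (use that in auto)
    then show ?thesis using that B B' by (simp add: mat_delete_def)
  qed
  then have "mat_delete B i j = mat_delete B' i j"
    using B B' by (intro eq_matI) simp_all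
  then show ?thesis by (simp add: cofactor_def)
qed

lemma char_poly_affine_in_column:
  fixes A :: "'a::field mat"
  assumes A: "A \<in> carrier_mat n n" and j: "j < n"
  obtains g where "degree g < n"
    and "\<And>s. char_poly (A * mat_diag n (d(j := s)))
              = char_poly (A * mat_diag n (d(j := 0))) - Polynomial.smult s g"
proof -
  define C where "C s = char_poly_matrix (A * mat_diag n (d(j := s)))" for s
  have C: "C s \<in> carrier_mat n n" for s
    using A unfolding C_def by simp
  have C_index: "C s $$ (i, k) = (if i = k then [:0, 1:] else 0) - [:A $$ (i, k) * (d(j := s)) k:]"
    if "i < n" "k < n" for s i k
    using that A unfolding C_def char_poly_matrix_def by (simp add: mat_diag_mult_right)
  have cof: "cofactor (C s) i j = cofactor (C 0) i j" for s i
    by (rule cofactor_cong_off_column[OF C C]) (simp add: C_index)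
  define g where "g = (\<Sum>i<n. [:A $$ (i, j):] * cofactor (C 0) i j)"
  have affine: "char_poly (A * mat_diag n (d(j := s)))
      = char_poly (A * mat_diag n (d(j := 0))) - Polynomial.smult s g" for s
  proof -
    have "C s $$ (i, j) * cofactor (C s) i j
        = C 0 $$ (i, j) * cofactor (C 0) i j - [:s:] * ([:A $$ (i, j):] * cofactor (C 0) i j)"
      if "i < n" for i
      using that j by (simp add: C_index cof[of s] left_diff_distrib)
    then have "det (C s) = det (C 0) - [:s:] * g"
      unfolding laplace_expansion_column[OF C j] g_def
      by (simp add: sum_subtractf sum_distrib_left)
    then show ?thesis unfolding C_def char_poly_def by simp
  qed
  have "degree g < n"
  proof -
    have g: "g = char_poly (A * mat_diag n (d(j := 0))) - char_poly (A * mat_diag n (d(j := 1)))"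
      using affine[of 1] by simp
    have monic: "degree (char_poly (A * mat_diag n e)) = n \<and> coeff (char_poly (A * mat_diag n e)) n = 1"
      for e by (rule degree_monic_char_poly) (use A in simp)
    have "degree g \<le> n"
      unfolding g by (rule degree_diff_le) (simp_all add: monic)
    moreover have "coeff g n = 0"
      unfolding g by (simp add: monic)
    ultimately show ?thesis
      using j by (cases "g = 0") (auto simp: le_less)
  qed
  then show ?thesis using affine that by blast
qed

lemma mat_delete_mult_mat_diag_last:
  assumes A: "A \<in> carrier_mat (Suc n) (Suc n)"
  shows "mat_delete (A * mat_diag (Suc n) d) n n = mat_delete A n n * mat_diag n d"
proof -
  have A': "mat_delete A n n \<in> carrier_mat n n" using mat_delete_carrier[OF A] by simp
  show ?thesis
    unfolding mat_diag_mult_right[OF A] mat_diag_mult_right[OF A']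
    using A by (intro eq_matI) (auto simp: mat_delete_def)
qed

lemma invertible_mat_diag:
  fixes d :: "nat \<Rightarrow> 'a::field"
  assumes "\<forall>i<n. d i \<noteq> 0"
  shows "invertible_mat (mat_diag n d)"
proof -
  define e where "e i = inverse (d i)" for i
  have "mat_diag n (\<lambda>i. d i * e i) = 1\<^sub>m n" and "mat_diag n (\<lambda>i. e i * d i) = 1\<^sub>m n"
    using assms by (auto simp: mat_diag_def e_def intro!: eq_matI)
  then have "mat_diag n d * mat_diag n e = 1\<^sub>m n" and "mat_diag n e * mat_diag n d = 1\<^sub>m n"
    by simp_all
  then show ?thesis
    unfolding invertible_mat_def inverts_mat_def by (auto simp: mat_diag_def)
qed

lemma invertible_mat_det_neq_0:
  fixes A :: "'a::field mat"
  assumes A: "A \<in> carrier_mat n n" and "invertible_mat A"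
  shows "det A \<noteq> 0"
proof -
  obtain B where AB: "A * B = 1\<^sub>m n" and BA: "B * A = 1\<^sub>m (dim_row B)"
    using assms unfolding invertible_mat_def inverts_mat_def by auto
  have B: "B \<in> carrier_mat n n"
    using A arg_cong[OF AB, of dim_col] arg_cong[OF BA, of dim_col] by auto
  have "det A * det B = 1" using det_mult[OF A B] AB by simp
  then show ?thesis by auto
qed

lemma eigenvalue_0_iff_det_eq_0:
  fixes A :: "'a::field mat"
  assumes "A \<in> carrier_mat n n"
  shows "eigenvalue A 0 \<longleftrightarrow> det A = 0"
proof -
  have "char_matrix A 0 = A"
    using assms by (intro eq_matI) (auto simp: char_matrix_def)
  then show ?thesis using eigenvalue_det[OF assms] by simp
qed

lemma simple_roots_on_nonzero_x_mult:
  fixes c :: "'a::idom poly"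
  assumes "simple_roots_on (- {0}) c"
  shows "simple_roots_on (- {0}) (monom 1 1 * c)"
  using assms by (auto simp: simple_roots_on_def pderiv_mult pderiv_monom poly_monom)

lemma exists_mat_diag_simple_nonzero_eigenvalues:
  fixes A :: "'a::field_char_0 mat"
  assumes "A \<in> carrier_mat n n"
  shows "\<exists>d. (\<forall>i<n. d i \<noteq> 0) \<and> simple_roots_on (- {0}) (char_poly (A * mat_diag n d))"
  using assms
proof (induction n arbitrary: A)
  case 0
  then have "A * mat_diag 0 (\<lambda>_. 1) \<in> carrier_mat 0 0" by simp
  from degree_monic_char_poly[OF this] have "char_poly (A * mat_diag 0 (\<lambda>_. 1)) = 1"
    using degree_0_id by (metis one_pCons)
  then show ?case by (intro exI[of _ "\<lambda>_. 1"]) (simp add: simple_roots_on_def)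
next
  case (Suc n)
  have A: "A \<in> carrier_mat (Suc n) (Suc n)" by fact
  define A' where "A' = mat_delete A n n"
  have "A' \<in> carrier_mat n n" using mat_delete_carrier[OF A] unfolding A'_def by simp
  then obtain d' where d': "\<forall>i<n. d' i \<noteq> 0"
    and simple': "simple_roots_on (- {0}) (char_poly (A' * mat_diag n d'))"
    using Suc.IH by blast
  obtain g where "degree g < Suc n" and affine: "\<And>s. char_poly (A * mat_diag (Suc n) (d'(n := s)))
      = char_poly (A * mat_diag (Suc n) (d'(n := 0))) - Polynomial.smult s g"
    using char_poly_affine_in_column[OF A, of n d'] by blast
  define f where "f = char_poly (A * mat_diag (Suc n) (d'(n := 0)))"
  have AD: "A * mat_diag (Suc n) (d'(n := 0)) \<in> carrier_mat (Suc n) (Suc n)" using A by simp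
  have "mat_diag n (d'(n := 0)) = mat_diag n d'"
    unfolding mat_diag_def by (rule cong_mat) auto
  then have delete: "mat_delete (A * mat_diag (Suc n) (d'(n := 0))) n n = A' * mat_diag n d'"
    unfolding mat_delete_mult_mat_diag_last[OF A] A'_def by simp
  have "(A * mat_diag (Suc n) (d'(n := 0))) $$ (i, n) = 0" if "i < Suc n" for i
    using A that by (simp add: mat_diag_mult_right)
  then have "f = monom 1 1 * char_poly (A' * mat_diag n d')"
    unfolding f_def using char_poly_0_column[OF _ AD lessI] delete by simp
  then have simple: "simple_roots_on (- {0}) f"
    using simple_roots_on_nonzero_x_mult[OF simple'] by simp
  have "degree g < degree f"
    using degree_monic_char_poly[OF AD] \<open>degree g < Suc n\<close> unfolding f_def by simp
  then have "finite {s. \<not> simple_roots_on (- {0}) (f - Polynomial.smult s g)}"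
    using simple by (rule finite_non_simple_roots_perturbation)
  then obtain s where "s \<notin> insert 0 {s. \<not> simple_roots_on (- {0}) (f - Polynomial.smult s g)}"
    using ex_new_if_finite[OF infinite_UNIV_char_0] by (meson finite_insert)
  then have "s \<noteq> 0" and "simple_roots_on (- {0}) (f - Polynomial.smult s g)"
    by simp_all
  moreover have "char_poly (A * mat_diag (Suc n) (d'(n := s))) = f - Polynomial.smult s g"
    unfolding f_def by (rule affine)
  moreover have "\<forall>i<Suc n. (d'(n := s)) i \<noteq> 0"
    using d' \<open>s \<noteq> 0\<close> by simp
  ultimately show ?case by (intro exI[of _ "d'(n := s)"]) (simp del: fun_upd_apply)
qed

lemma card_eigenvalues_eq_dim:
  fixes B :: "'a::{alg_closed_field, field_char_0} mat"
  assumes B: "B \<in> carrier_mat n n" and "det B \<noteq> 0"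
    and simple: "simple_roots_on (- {0}) (char_poly B)"
  shows "card {e. eigenvalue B e} = n"
proof -
  have "poly (char_poly B) 0 \<noteq> 0"
    using assms eigenvalue_0_iff_det_eq_0[OF B] eigenvalue_root_char_poly[OF B] by simp
  then have "rsquarefree (char_poly B)"
    using simple unfolding rsquarefree_roots simple_roots_on_def by blast
  then have "card {e. poly (char_poly B) e = 0} = size (proots (char_poly B))"
    by (rule card_roots_rsquarefree)
  also have "\<dots> = n"
    using size_proots_alg_closed degree_monic_char_poly[OF B] by (metis leading_coeff_0_iff one_neq_zero)
  finally show ?thesis by (simp add: eigenvalue_root_char_poly[OF B])
qed

theorem proposition9:
  fixes A :: "'a :: {alg_closed_field, field_char_0} mat" and n :: nat
  assumes "n \<ge> 1"
    and "A \<in> carrier_mat n n"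
    and "invertible_mat A"
  shows "\<exists>D \<in> carrier_mat n n. diagonal_mat D \<and> invertible_mat D \<and>
           card {e. eigenvalue (A * D) e} = n"
proof -
  note A = assms(2)
  obtain d where d: "\<forall>i<n. d i \<noteq> 0"
    and simple: "simple_roots_on (- {0}) (char_poly (A * mat_diag n d))"
    using exists_mat_diag_simple_nonzero_eigenvalues[OF A] by blast
  define D where "D = mat_diag n d"
  have D: "D \<in> carrier_mat n n" and "diagonal_mat D" and "invertible_mat D"
    unfolding D_def using invertible_mat_diag[OF d] by (auto simp: diagonal_mat_def mat_diag_def)
  have "det (A * D) \<noteq> 0"
    using det_mult[OF A D] invertible_mat_det_neq_0[OF A assms(3)]
      invertible_mat_det_neq_0[OF D \<open>invertible_mat D\<close>] by simp
  then have "card {e. eigenvalue (A * D) e} = n"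
    using A D simple unfolding D_def by (intro card_eigenvalues_eq_dim) simp_all
  then show ?thesis
    using D \<open>diagonal_mat D\<close> \<open>invertible_mat D\<close> by blast
qed

end
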